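(* Let $\phi$ be the real root of $x^3=x^2+x+1$. For any positive integers $n,k$ with $k\ge 4$, the number of positive tribonacci sequences of length $k$ terminating at $n$ is at most \[\left\lceil 1500\frac{n}{\phi^{3k/2}}\right\rceil^2.\]
   Context: A tribonacci sequence of length $k$ is a sequence of integers $\langle a_i\rangle_{i=1}^k$ such that $a_i=a_{i-1}+a_{i-2}+a_{i-3}$ for all $4\le i\le k$. It terminates at $a_k$, and it is positive if $a_1,a_2,a_3>0$. *)

theory Defs
  imports Complex_Main
begin

(* A tribonacci sequence of length k, represented as a list a with a!(i-1) = a_i. *)
definition is_tribonacci :: "nat \<Rightarrow> int list \<Rightarrow> bool" where
  "is_tribonacci k a \<longleftrightarrow> length a = k \<and>
     (\<forall>i. 4 \<le> i \<and> i \<le> k \<longrightarrow> a!(i-1) = a!(i-2) + a!(i-3) + a!(i-4))"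

definition positive_trib :: "int list \<Rightarrow> bool" where
  "positive_trib a \<longleftrightarrow> a!0 > 0 \<and> a!1 > 0 \<and> a!2 > 0"

definition terminates_at :: "nat \<Rightarrow> int list \<Rightarrow> int \<Rightarrow> bool" where
  "terminates_at k a n \<longleftrightarrow> a!(k-1) = n"

definition trib_phi :: real where
  "trib_phi = (THE x::real. x^3 = x^2 + x + 1)"

end

theory Submission
  imports Defs
begin

(* The quadratic form tail_form, evaluated on three consecutive terms (x, y, z) of a tribonacci
   sequence, vanishes on the dominant direction (1, \<phi>, \<phi>^2) and shrinks by the factor \<phi> at
   every step of the recurrence. For a positive sequence it starts at O(M^2), M the largest initial
   term, and growth at rate \<phi> gives M = O(n \<phi>^(6 - k)) for a sequence ending at n, so on the last
   three terms it is O(n^2 \<phi>^(-3k)). Being positive definite, it confines the second and third last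
   terms to intervals of length O(n \<phi>^(-3k/2)) around n/\<phi> and n/\<phi>^2, and these two terms
   together with n determine the sequence. *)

lemma real_cubic_root_unique:
  fixes x r :: real
  assumes x: "x^3 = x^2 + x + 1" and r: "r^3 = r^2 + r + 1" "5/3 < r"
  shows "x = r"
proof (rule ccontr)
  assume "x \<noteq> r"
  have "(x - r) * (x^2 + x*r + r^2 - x - r - 1) = 0"
    using x r(1) by algebra
  with \<open>x \<noteq> r\<close> have q: "x^2 + x*r + r^2 - x - r - 1 = 0" by simp
  have "4 * (x^2 + x*r + r^2 - x - r - 1) = (2*x + r - 1)^2 + (3*r - 5) * (r + 1)"
    by (simp add: algebra_simps power2_eq_square)
  moreover have "0 < (3*r - 5) * (r + 1)" using r(2) by simp
  ultimately show False using q by (smt (verit) zero_le_power2)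
qed

lemma
  shows trib_phi_cubic: "trib_phi^3 = trib_phi^2 + trib_phi + 1"
    and trib_phi_bounds: "1.83 \<le> trib_phi" "trib_phi \<le> 1.84"
proof -
  let ?f = "\<lambda>x::real. x^3 - x^2 - x - 1"
  have "\<exists>x. 1.83 \<le> x \<and> x \<le> 1.84 \<and> ?f x = 0"
    by (rule IVT) (simp_all add: power3_eq_cube power2_eq_square)
  then obtain r :: real where r: "1.83 \<le> r" "r \<le> 1.84" "r^3 = r^2 + r + 1" by auto
  have "trib_phi = r"
    unfolding trib_phi_def
    by (rule the_equality) (use r real_cubic_root_unique in auto)
  with r show "trib_phi^3 = trib_phi^2 + trib_phi + 1" "1.83 \<le> trib_phi" "trib_phi \<le> 1.84"
    by simp_all
qed

definition tribonacci_upto :: "nat \<Rightarrow> (nat \<Rightarrow> 'a::plus) \<Rightarrow> bool" where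
  "tribonacci_upto k f \<longleftrightarrow> (\<forall>j. j + 3 < k \<longrightarrow> f (j + 3) = f (j + 2) + f (j + 1) + f j)"

lemma tribonacci_uptoD:
  assumes "tribonacci_upto k f" "3 \<le> i" "i < k"
  shows "f i = f (i - 1) + f (i - 2) + f (i - 3)"
proof -
  obtain j where "i = j + 3" using assms(2) by (metis add.commute le_Suc_ex)
  then show ?thesis using assms unfolding tribonacci_upto_def by (simp add: numeral_eq_Suc)
qed

lemma tribonacci_upto_pos:
  fixes f :: "nat \<Rightarrow> 'a::linordered_semidom"
  assumes f: "tribonacci_upto k f" and pos: "0 < f 0" "0 < f 1" "0 < f 2" and i: "i < k"
  shows "0 < f i"
  using i
proof (induction i rule: less_induct)
  case (less i)
  show ?case
  proof (cases "i < 3")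
    case True
    then have "i = 0 \<or> i = 1 \<or> i = 2" by auto
    then show ?thesis using pos by auto
  next
    case False
    then show ?thesis
      using tribonacci_uptoD[OF f] less by (simp add: add_pos_pos)
  qed
qed

lemma tribonacci_upto_ge_initial:
  fixes f :: "nat \<Rightarrow> 'a::linordered_semidom"
  assumes f: "tribonacci_upto k f" and pos: "0 < f 0" "0 < f 1" "0 < f 2"
    and i: "3 \<le> i" "i < k"
  shows "max (f 0) (max (f 1) (f 2)) \<le> f i"
  using i
proof (induction i rule: less_induct)
  case (less i)
  have rec: "f i = f (i - 1) + f (i - 2) + f (i - 3)"
    using tribonacci_uptoD[OF f] less.prems by blast
  show ?case
  proof (cases "i = 3")
    case True
    then show ?thesis using rec pos by (auto simp: add_pos_pos add_increasing add_increasing2)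
  next
    case False
    then have "max (f 0) (max (f 1) (f 2)) \<le> f (i - 1)" using less by auto
    moreover have "0 < f (i - 2)" "0 < f (i - 3)"
      using tribonacci_upto_pos[OF f pos] less.prems by auto
    ultimately show ?thesis using rec by (simp add: add_increasing2)
  qed
qed

lemma tribonacci_growth:
  fixes f :: "nat \<Rightarrow> real"
  assumes p: "1 \<le> p" "p^3 = p^2 + p + 1" and f: "tribonacci_upto k f"
    and pos: "0 < f 0" "0 < f 1" "0 < f 2" and i: "3 \<le> i" "i < k"
  shows "max (f 0) (max (f 1) (f 2)) * p^i \<le> f i * p^5"
  using i
proof (induction i rule: less_induct)
  case (less i)
  define M where "M = max (f 0) (max (f 1) (f 2))"
  have "0 < M" using pos unfolding M_def by auto
  show ?case
  proof (cases "i \<le> 5")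
    case True
    have "M * p^i \<le> M * p^5"
      using True p \<open>0 < M\<close> by (simp add: power_increasing)
    also have "\<dots> \<le> f i * p^5"
      using tribonacci_upto_ge_initial[OF f pos less.prems] p unfolding M_def by simp
    finally show ?thesis unfolding M_def .
  next
    case False
    then obtain j where j: "i = j + 6" using le_Suc_ex[of 6 i] by auto
    have IH: "M * p^(i - d) \<le> f (i - d) * p^5" if "d \<in> {1, 2, 3}" for d
      using less.IH[of "i - d"] less.prems that j unfolding M_def by auto
    have "p^i = p^(i - 3) * p^3" "p^(i - 1) = p^(i - 3) * p^2" "p^(i - 2) = p^(i - 3) * p"
      using j by (simp_all add: add.commute flip: power_add power_Suc2)
    then have "M * p^i = M * p^(i - 1) + M * p^(i - 2) + M * p^(i - 3)"
      by (simp add: p(2) algebra_simps)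
    also have "\<dots> \<le> (f (i - 1) + f (i - 2) + f (i - 3)) * p^5"
      using IH[of 1] IH[of 2] IH[of 3] by (simp add: algebra_simps)
    also have "\<dots> = f i * p^5"
      using tribonacci_uptoD[OF f] less.prems by simp
    finally show ?thesis unfolding M_def .
  qed
qed

(* With b i = f (i+1) - \<phi> f i, the value on (f i, f (i+1), f (i+2)) is \<phi> |b (i+1) - \<alpha> b i|^2
   for a complex root \<alpha> of the cubic (\<alpha> + conj \<alpha> = 1 - \<phi>, |\<alpha>|^2 = 1/\<phi>); the recurrence multiplies
   b (i+1) - \<alpha> b i by conj \<alpha>. *)
definition tail_form :: "'a::comm_ring_1 \<Rightarrow> 'a \<Rightarrow> 'a \<Rightarrow> 'a \<Rightarrow> 'a" where
  "tail_form p x y z = p * (z - p*y)^2 + p*(p - 1) * (z - p*y) * (y - p*x) + (y - p*x)^2"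

lemma tail_form_step:
  fixes p :: "'a::comm_ring_1"
  assumes "p^3 = p^2 + p + 1"
  shows "p * tail_form p x y (y + x + w) = tail_form p w x y"
proof -
  have "p * (y + x + w - p*y) + (p*(p - 1) * (y - p*x) + (x - p*w)) = (p^2 + p + 1 - p^3) * x"
    by (simp add: algebra_simps power2_eq_square power3_eq_cube)
  then have lead: "p * (y + x + w - p*y) = - (p*(p - 1) * (y - p*x) + (x - p*w))"
    unfolding eq_neg_iff_add_eq_0 using assms by simp
  have "p * tail_form p x y (y + x + w)
      = (p * (y + x + w - p*y))^2 + p*(p - 1) * (p * (y + x + w - p*y)) * (y - p*x) + p * (y - p*x)^2"
    unfolding tail_form_def by (simp add: algebra_simps power2_eq_square)
  also have "\<dots> = tail_form p w x y"
    unfolding lead tail_form_def by (simp add: algebra_simps power2_eq_square)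
  finally show ?thesis .
qed

lemma tail_form_decay:
  fixes f :: "nat \<Rightarrow> 'a::comm_ring_1"
  assumes p: "p^3 = p^2 + p + 1" and f: "tribonacci_upto k f" and i: "i + 2 < k"
  shows "p^i * tail_form p (f i) (f (i + 1)) (f (i + 2)) = tail_form p (f 0) (f 1) (f 2)"
  using i
proof (induction i)
  case 0
  show ?case by (simp add: numeral_2_eq_2)
next
  case (Suc i)
  have "f (i + 3) = f (i + 2) + f (i + 1) + f i"
    using f Suc.prems unfolding tribonacci_upto_def by simp
  then have "p^Suc i * tail_form p (f (Suc i)) (f (Suc i + 1)) (f (Suc i + 2))
      = p^i * (p * tail_form p (f (i + 1)) (f (i + 2)) (f (i + 2) + f (i + 1) + f i))"
    by (simp add: numeral_eq_Suc)
  also have "\<dots> = p^i * tail_form p (f i) (f (i + 1)) (f (i + 2))"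
    by (simp add: tail_form_step[OF p])
  also have "\<dots> = tail_form p (f 0) (f 1) (f 2)"
    using Suc by simp
  finally show ?case .
qed

lemma tail_form_initial_bound:
  fixes p M x y z :: real
  assumes p: "1 \<le> p" "p \<le> 1.84"
    and xyz: "0 < x" "0 < y" "0 < z" "x \<le> M" "y \<le> M" "z \<le> M"
  shows "tail_form p x y z \<le> 16 * M^2"
proof -
  define u v where "u = z - p*y" and "v = y - p*x"
  have "\<bar>u\<bar> \<le> p*M" "\<bar>v\<bar> \<le> p*M"
    unfolding u_def v_def abs_le_iff using p xyz mult_left_mono[of _ M p]
    by (smt (verit, best) mult_le_cancel_right1)+
  then have prod: "\<bar>a * b\<bar> \<le> (p*M)^2" if "a \<in> {u, v}" "b \<in> {u, v}" for a b
  proof -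
    have "\<bar>a\<bar> \<le> p*M" "\<bar>b\<bar> \<le> p*M" using that \<open>\<bar>u\<bar> \<le> p*M\<close> \<open>\<bar>v\<bar> \<le> p*M\<close> by auto
    then show ?thesis
      unfolding abs_mult power2_eq_square by (intro mult_mono) auto
  qed
  have "p*(p - 1) * (u*v) \<le> p*(p - 1) * (p*M)^2"
    using prod[of u v] p by (intro mult_left_mono) auto
  moreover have "p * u^2 \<le> p * (p*M)^2" "v^2 \<le> (p*M)^2"
    using prod[of u u] prod[of v v] p by (simp_all add: power2_eq_square)
  ultimately have "tail_form p x y z \<le> (p^2 + 1) * p^2 * M^2"
    unfolding tail_form_def u_def[symmetric] v_def[symmetric]
    by (simp add: algebra_simps power2_eq_square)
  also have "\<dots> \<le> 16 * M^2"
  proof (rule mult_right_mono)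
    have "p^2 \<le> 1.84^2" using p by (intro power_mono) auto
    then have "(p^2 + 1) * p^2 \<le> (1.84^2 + 1) * 1.84^2"
      by (intro mult_mono) auto
    then show "(p^2 + 1) * p^2 \<le> 16" by (simp add: power2_eq_square)
  qed simp
  finally show ?thesis .
qed

lemma tail_form_coercive:
  fixes p x y z :: real
  assumes "0 < p" "p * (p - 1)^2 \<le> 2"
  shows "p^3 * (y - z/p)^2 \<le> 2 * tail_form p x y z"
    and "p^2 * (x - y/p)^2 \<le> 2 * tail_form p x y z"
proof -
  define u v where "u = z - p*y" and "v = y - p*x"
  have "p^3 * (y - z/p)^2 = p * u^2" "p^2 * (x - y/p)^2 = v^2"
    unfolding u_def v_def using assms(1)
    by (simp_all add: field_simps power2_eq_square power3_eq_cube)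
  moreover have "2 * tail_form p x y z - p * u^2 = p * (u + (p - 1)*v)^2 + (2 - p*(p - 1)^2) * v^2"
    "2 * tail_form p x y z - v^2 = 2*p * (u + (p - 1)*v/2)^2 + (1 - p*(p - 1)^2/2) * v^2"
    unfolding tail_form_def u_def v_def by (simp_all add: field_simps power2_eq_square)
  moreover have "0 \<le> p * (u + (p - 1)*v)^2" "0 \<le> 2*p * (u + (p - 1)*v/2)^2"
    "0 \<le> (2 - p*(p - 1)^2) * v^2" "0 \<le> (1 - p*(p - 1)^2/2) * v^2"
    using assms by simp_all
  ultimately show "p^3 * (y - z/p)^2 \<le> 2 * tail_form p x y z"
    "p^2 * (x - y/p)^2 \<le> 2 * tail_form p x y z"
    by linarith+
qed

lemma tail_form_last_bound:
  fixes f :: "nat \<Rightarrow> real"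
  assumes p: "1 \<le> p" "p \<le> 1.84" "p^3 = p^2 + p + 1" and f: "tribonacci_upto k f"
    and pos: "0 < f 0" "0 < f 1" "0 < f 2" and k: "4 \<le> k"
  shows "tail_form p (f (k - 3)) (f (k - 2)) (f (k - 1)) * p^(3*k) \<le> 16 * p^15 * f (k - 1)^2"
proof -
  define M where "M = max (f 0) (max (f 1) (f 2))"
  have "0 \<le> M" using pos unfolding M_def by auto
  have decay: "p^(k - 3) * tail_form p (f (k - 3)) (f (k - 2)) (f (k - 1))
      = tail_form p (f 0) (f 1) (f 2)"
    using tail_form_decay[OF p(3) f, of "k - 3"] k by (simp add: numeral_eq_Suc Suc_diff_Suc)
  have growth: "M * p^(k - 1) \<le> f (k - 1) * p^5"
    using tribonacci_growth[OF p(1,3) f pos, of "k - 1"] k unfolding M_def by simp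
  have "p^(3*k) = p^(k - 3) * (p^(k - 1))^2 * p^5"
    using k by (simp add: power2_eq_square flip: power_add)
  then have "tail_form p (f (k - 3)) (f (k - 2)) (f (k - 1)) * p^(3*k)
      = (p^(k - 3) * tail_form p (f (k - 3)) (f (k - 2)) (f (k - 1))) * (p^(k - 1))^2 * p^5"
    by (simp add: ac_simps)
  also have "\<dots> = tail_form p (f 0) (f 1) (f 2) * (p^(k - 1))^2 * p^5"
    by (simp only: decay)
  also have "\<dots> \<le> 16 * M^2 * (p^(k - 1))^2 * p^5"
    using tail_form_initial_bound[OF p(1,2) pos, of M] p unfolding M_def
    by (intro mult_right_mono) auto
  also have "\<dots> = 16 * (M * p^(k - 1))^2 * p^5"
    by (simp add: power_mult_distrib)
  also have "\<dots> \<le> 16 * (f (k - 1) * p^5)^2 * p^5"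
    using growth \<open>0 \<le> M\<close> p by (intro mult_right_mono mult_left_mono power_mono) auto
  also have "\<dots> = 16 * p^15 * f (k - 1)^2"
    by (simp add: power_mult_distrib flip: power_mult power_add)
  finally show ?thesis .
qed

lemma tail_form_small_imp_close:
  fixes p t x y z :: real
  assumes p: "1.83 \<le> p" "p \<le> 1.84" and "0 \<le> t"
    and small: "tail_form p x y z \<le> 150400 * t^2"
  shows "\<bar>y - z/p\<bar> \<le> 250 * t" and "\<bar>x - z/p^2\<bar> \<le> 450 * t"
proof -
  have "(p - 1)^2 \<le> 0.84^2" using p by (intro power_mono) auto
  then have "p * (p - 1)^2 \<le> 1.84 * 0.84^2" using p by (intro mult_mono) auto
  then have coercive: "p^3 * (y - z/p)^2 \<le> 300800 * t^2" "p^2 * (x - y/p)^2 \<le> 300800 * t^2"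
    using tail_form_coercive[where p=p and x=x and y=y and z=z] small p
    by (simp_all add: power2_eq_square)
  have "1.83^3 \<le> p^3" "1.83^2 \<le> p^2" using p by (intro power_mono; simp)+
  then have "153/25 \<le> p^3" "167/50 \<le> p^2" by (simp_all add: power3_eq_cube power2_eq_square)
  then have "153/25 * (y - z/p)^2 \<le> p^3 * (y - z/p)^2"
    and "167/50 * (x - y/p)^2 \<le> p^2 * (x - y/p)^2"
    by (intro mult_right_mono; simp)+
  with coercive zero_le_power2[of t]
  have "(y - z/p)^2 \<le> 62500 * t^2" "(x - y/p)^2 \<le> 91204 * t^2"
    by linarith+
  then have "(y - z/p)^2 \<le> (250 * t)^2" "(x - y/p)^2 \<le> (302 * t)^2"
    by (simp_all add: power_mult_distrib)
  then have y_close: "\<bar>y - z/p\<bar> \<le> 250 * t" and x_close: "\<bar>x - y/p\<bar> \<le> 302 * t"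
    using \<open>0 \<le> t\<close> power2_le_iff_abs_le[of "250 * t" "y - z/p"]
      power2_le_iff_abs_le[of "302 * t" "x - y/p"]
    by simp_all
  then show "\<bar>y - z/p\<bar> \<le> 250 * t" by blast
  have "\<bar>(y - z/p) / p\<bar> \<le> 250 * t / p"
    using y_close p by (simp add: abs_divide divide_right_mono)
  also have "\<dots> \<le> 250 * t / 1.83"
    using p \<open>0 \<le> t\<close> by (intro divide_left_mono) auto
  also have "\<dots> \<le> 148 * t"
    using \<open>0 \<le> t\<close> by simp
  finally have "\<bar>(y - z/p) / p\<bar> \<le> 148 * t" .
  moreover have "\<bar>x - z/p^2\<bar> \<le> \<bar>x - y/p\<bar> + \<bar>(y - z/p) / p\<bar>"
  proof -
    have "x - z/p^2 = (x - y/p) + (y - z/p) / p"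
      using p by (simp add: field_simps power2_eq_square)
    then show ?thesis by (metis abs_triangle_ineq)
  qed
  ultimately show "\<bar>x - z/p^2\<bar> \<le> 450 * t"
    using x_close by linarith
qed

lemma tribonacci_last_terms_close:
  fixes f :: "nat \<Rightarrow> real"
  assumes f: "tribonacci_upto k f" and pos: "0 < f 0" "0 < f 1" "0 < f 2" and k: "4 \<le> k"
  defines "t \<equiv> f (k - 1) / trib_phi powr (3 * real k / 2)"
  shows "\<bar>f (k - 2) - f (k - 1) / trib_phi\<bar> \<le> 250 * t"
    and "\<bar>f (k - 3) - f (k - 1) / trib_phi^2\<bar> \<le> 450 * t"
proof -
  let ?p = trib_phi
  have p: "1.83 \<le> ?p" "?p \<le> 1.84" "0 < ?p" using trib_phi_bounds by auto
  have "(?p powr (3 * real k / 2))^2 = ?p powr real (3*k)"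
    using p by (simp add: powr_power)
  also have "\<dots> = ?p^(3*k)"
    using p by (intro powr_realpow) simp
  finally have t2: "t^2 * ?p^(3*k) = f (k - 1)^2"
    unfolding t_def using p by (simp add: power_divide)
  have "0 \<le> t"
    unfolding t_def using tribonacci_upto_pos[OF f pos, of "k - 1"] k by simp
  have "?p^15 \<le> 1.84^15" using p by (intro power_mono) auto
  moreover have "(1.84::real)^15 \<le> 9400" by (simp add: power_divide)
  ultimately have "16 * ?p^15 \<le> 150400" by simp
  have "tail_form ?p (f (k - 3)) (f (k - 2)) (f (k - 1)) * ?p^(3*k) \<le> 16 * ?p^15 * f (k - 1)^2"
    using tail_form_last_bound[OF _ p(2) trib_phi_cubic f pos k] p by simp
  also have "\<dots> \<le> 150400 * f (k - 1)^2"
    using \<open>16 * ?p^15 \<le> 150400\<close> by (intro mult_right_mono) simp_all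
  also have "\<dots> = (150400 * t^2) * ?p^(3*k)"
    unfolding t2[symmetric] by (simp only: mult.assoc)
  finally have "tail_form ?p (f (k - 3)) (f (k - 2)) (f (k - 1)) \<le> 150400 * t^2"
    using p(3) by (meson mult_right_le_imp_le zero_less_power)
  then show "\<bar>f (k - 2) - f (k - 1) / ?p\<bar> \<le> 250 * t"
    and "\<bar>f (k - 3) - f (k - 1) / ?p^2\<bar> \<le> 450 * t"
    using tail_form_small_imp_close[OF p(1,2) \<open>0 \<le> t\<close>] by blast+
qed

lemma tribonacci_upto_of_int:
  "tribonacci_upto k f \<Longrightarrow> tribonacci_upto k (\<lambda>i. of_int (f i) :: 'a::ring_1)"
  unfolding tribonacci_upto_def by simp

lemma tribonacci_upto_eq_if_last_three:
  fixes f g :: "nat \<Rightarrow> 'a::cancel_semigroup_add"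
  assumes f: "tribonacci_upto k f" and g: "tribonacci_upto k g"
    and last: "f (k - 1) = g (k - 1)" "f (k - 2) = g (k - 2)" "f (k - 3) = g (k - 3)"
    and i: "i < k"
  shows "f i = g i"
  using i
proof (induction "k - i" arbitrary: i rule: less_induct)
  case less
  show ?case
  proof (cases "i + 3 < k")
    case True
    have "f (i + 3) = f (i + 2) + f (i + 1) + f i" "g (i + 3) = g (i + 2) + g (i + 1) + g i"
      using f g True unfolding tribonacci_upto_def by blast+
    moreover have "f (i + 1) = g (i + 1)" "f (i + 2) = g (i + 2)" "f (i + 3) = g (i + 3)"
      using less True by auto
    ultimately show ?thesis by (metis add_left_cancel)
  next
    case False
    then have "i \<in> {k - 1, k - 2, k - 3}" using less.prems by auto
    then show ?thesis using last by auto
  qed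
qed

lemma is_tribonacci_tribonacci_upto:
  assumes "is_tribonacci k a"
  shows "tribonacci_upto k (nth a)"
  unfolding tribonacci_upto_def
proof (intro allI impI)
  fix j assume "j + 3 < k"
  then have "4 \<le> j + 4 \<and> j + 4 \<le> k" by simp
  then have "a ! (j + 4 - 1) = a ! (j + 4 - 2) + a ! (j + 4 - 3) + a ! (j + 4 - 4)"
    using assms unfolding is_tribonacci_def by blast
  then show "a ! (j + 3) = a ! (j + 2) + a ! (j + 1) + a ! j"
    by (simp add: numeral_eq_Suc)
qed

lemma is_tribonacci_eq_if_last_three:
  assumes a: "is_tribonacci k a" and b: "is_tribonacci k b"
    and last: "a ! (k - 1) = b ! (k - 1)" "a ! (k - 2) = b ! (k - 2)" "a ! (k - 3) = b ! (k - 3)"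
  shows "a = b"
proof (rule nth_equalityI)
  show "length a = length b" using a b unfolding is_tribonacci_def by simp
  fix i assume "i < length a"
  then show "a ! i = b ! i"
    using tribonacci_upto_eq_if_last_three[OF is_tribonacci_tribonacci_upto[OF a]
        is_tribonacci_tribonacci_upto[OF b] last] a
    unfolding is_tribonacci_def by simp
qed

lemma ints_within_eq_Icc: "{z::int. \<bar>of_int z - c\<bar> \<le> R} = {\<lceil>c - R\<rceil>..\<lfloor>c + R\<rfloor>}"
  by (auto simp: abs_le_iff ceiling_le_iff le_floor_iff)

lemma card_ints_within_le_ceiling:
  fixes c R X :: real
  assumes "0 \<le> R" "2 * R < X"
  shows "real (card {z::int. \<bar>of_int z - c\<bar> \<le> R}) \<le> of_int \<lceil>X\<rceil>"
proof -
  have "of_int (\<lfloor>c + R\<rfloor> - \<lceil>c - R\<rceil>) \<le> (c + R) - (c - R)"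
    unfolding of_int_diff using of_int_floor_le[of "c + R"] le_of_int_ceiling[of "c - R"]
    by linarith
  also have "\<dots> < of_int \<lceil>X\<rceil>"
    using assms le_of_int_ceiling[of X] by linarith
  finally have "\<lfloor>c + R\<rfloor> - \<lceil>c - R\<rceil> + 1 \<le> \<lceil>X\<rceil>"
    by linarith
  moreover have "0 \<le> \<lceil>X\<rceil>" using assms by linarith
  ultimately show ?thesis
    unfolding ints_within_eq_Icc by (cases "0 \<le> \<lfloor>c + R\<rfloor> - \<lceil>c - R\<rceil> + 1") simp_all
qed

theorem theorem2:
  fixes n k :: nat
  assumes "n > 0" and "k \<ge> 4"
  shows "real (card {a. is_tribonacci k a \<and> positive_trib a \<and> terminates_at k a (int n)})
         \<le> (real_of_int \<lceil>1500 * real n / trib_phi powr (3 * real k / 2)\<rceil>)^2"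
proof -
  define t where "t = real n / trib_phi powr (3 * real k / 2)"
  define S where "S = {a. is_tribonacci k a \<and> positive_trib a \<and> terminates_at k a (int n)}"
  define A where "A = {z::int. \<bar>of_int z - real n / trib_phi^2\<bar> \<le> 450 * t}"
  define B where "B = {z::int. \<bar>of_int z - real n / trib_phi\<bar> \<le> 250 * t}"
  define last2 where "last2 a = (a ! (k - 3), a ! (k - 2))" for a :: "int list"
  have "0 < t" unfolding t_def using assms(1) trib_phi_bounds(1) by simp
  have "last2 ` S \<subseteq> A \<times> B"
  proof (rule image_subsetI)
    fix a assume "a \<in> S"
    then have "tribonacci_upto k (\<lambda>i. real_of_int (a ! i))" "0 < real_of_int (a ! 0)"
      "0 < real_of_int (a ! 1)" "0 < real_of_int (a ! 2)" "real_of_int (a ! (k - 1)) = real n"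
      unfolding S_def positive_trib_def terminates_at_def
      by (auto intro: tribonacci_upto_of_int is_tribonacci_tribonacci_upto)
    from tribonacci_last_terms_close[OF this(1-4) assms(2)] this(5)
    show "last2 a \<in> A \<times> B" unfolding last2_def A_def B_def t_def by simp
  qed
  moreover have "inj_on last2 S"
    by (rule inj_onI)
      (auto simp: S_def last2_def terminates_at_def intro: is_tribonacci_eq_if_last_three)
  ultimately have "card S \<le> card A * card B"
    unfolding A_def B_def ints_within_eq_Icc
    by (metis card_cartesian_product card_inj_on_le finite_SigmaI finite_atLeastAtMost_int)
  then have "real (card S) \<le> real (card A) * real (card B)"
    by (metis of_nat_le_iff of_nat_mult)
  also have "\<dots> \<le> real_of_int \<lceil>1500 * t\<rceil> * real_of_int \<lceil>1500 * t\<rceil>"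
    unfolding A_def B_def using \<open>0 < t\<close>
    by (intro mult_mono card_ints_within_le_ceiling) auto
  finally show ?thesis
    unfolding S_def t_def by (simp add: power2_eq_square)
qed

end
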